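(* Let $A\in\mathbb C^{d\times d}$ be non-invertible and $b\in\mathbb C^d$ be such that $C_{Az+b}$ is bounded on $\mathcal F(\mathbb C^d)$. Then $C_{Az+b}$ is not cyclic.
   Context: $\mathcal F(\mathbb C^d)$ is the Fock space of entire functions with $\|f\|^2=(2\pi)^{-d}\int_{\mathbb C^d}|f|^2e^{-|z|^2/2}dA<\infty$; $C_\varphi f=f\circ\varphi$, bounded iff $\varphi(z)=Az+b$, $\|A\|\le1$, $\langle Av,b\rangle=0$ whenever $|Av|=|v|$. An operator $T$ is cyclic if some $x$ has $\mathrm{span}\{T^nx:n\ge0\}$ dense. *)

theory Defs
  imports "HOL-Analysis.Analysis"
begin

text \<open>Points of C^d are vectors of type complex^'d (d = CARD('d)).
  Lebesgue measure lborel on complex^'d is the 2d-dimensional Lebesgue (area) measure dA.\<close>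

definition clinear_map :: "(complex^'d \<Rightarrow> complex) \<Rightarrow> bool" where
  "clinear_map L \<longleftrightarrow> linear L \<and> (\<forall>c v. L (c *s v) = c * L v)"

definition entire_fun :: "(complex^'d \<Rightarrow> complex) \<Rightarrow> bool" where
  "entire_fun f \<longleftrightarrow> (\<forall>z. \<exists>L. clinear_map L \<and> (f has_derivative L) (at z))"

definition fock_sq :: "(complex^'d \<Rightarrow> complex) \<Rightarrow> ennreal" where
  "fock_sq f = ennreal ((2*pi) powr (- real CARD('d))) *
     (\<integral>\<^sup>+ z. ennreal ((cmod (f z))\<^sup>2 * exp (- (norm z)\<^sup>2 / 2)) \<partial>lborel)"

definition fock_space :: "(complex^'d \<Rightarrow> complex) set" where
  "fock_space = {f. entire_fun f \<and> fock_sq f < \<infinity>}"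

definition fock_norm :: "(complex^'d \<Rightarrow> complex) \<Rightarrow> real" where
  "fock_norm f = sqrt (enn2real (fock_sq f))"

definition bounded_comp_op :: "(complex^'d \<Rightarrow> complex^'d) \<Rightarrow> bool" where
  "bounded_comp_op \<phi> \<longleftrightarrow>
     (\<forall>f\<in>fock_space. f \<circ> \<phi> \<in> fock_space) \<and>
     (\<exists>M. \<forall>f\<in>fock_space. fock_norm (f \<circ> \<phi>) \<le> M * fock_norm f)"

definition cyclic_comp_op :: "(complex^'d \<Rightarrow> complex^'d) \<Rightarrow> bool" where
  "cyclic_comp_op \<phi> \<longleftrightarrow>
     (\<exists>x\<in>fock_space. \<forall>g\<in>fock_space. \<forall>\<epsilon>>0. \<exists>N (c::nat \<Rightarrow> complex).
        fock_norm (\<lambda>z. g z - (\<Sum>k<N. c k * x ((\<phi> ^^ k) z))) < \<epsilon>)"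

end

theory Submission
  imports Defs "HOL-Probability.Probability"
begin

text \<open>Choose \<open>v \<noteq> 0\<close> with \<open>A v = 0\<close>. Then \<open>\<phi>(z) = A z + b\<close> satisfies \<open>\<phi>(z + v) = \<phi>(z)\<close>, so
  every \<open>x \<circ> \<phi>\<^sup>k\<close> with \<open>k \<ge> 1\<close> is \<open>v\<close>-periodic. For a shift \<open>u\<close>, the functional \<open>\<Lambda>\<^sub>u\<close> sending
  \<open>F\<close> to the integral of \<open>F(z + u) - F(z + u + v)\<close> over the unit cube vanishes on \<open>v\<close>-periodic
  functions, and it is continuous for the Fock norm because the Gaussian weight is bounded below
  on compact sets. Hence on the span of the orbit of a cyclic vector \<open>x\<close> the pair \<open>(\<Lambda>\<^sub>0, \<Lambda>\<^sub>e)\<close>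
  takes values on the complex line through \<open>(\<Lambda>\<^sub>0 x, \<Lambda>\<^sub>e x)\<close>, and by density it does so on the
  whole Fock space. But for a coordinate \<open>j\<close> with \<open>v\<^sub>j \<noteq> 0\<close> and \<open>e\<close> the \<open>j\<close>-th unit vector,
  \<open>z\<^sub>j\<close> and \<open>z\<^sub>j\<^sup>2\<close> give linearly independent pairs.\<close>

lemma nn_integral_gaussian_finite:
  fixes a :: real
  assumes "a > 0"
  shows "(\<integral>\<^sup>+x. ennreal (exp (- a * x\<^sup>2)) \<partial>lborel) < \<infinity>"
proof -
  define \<sigma> where "\<sigma> = sqrt (1 / (2 * a))"
  have \<sigma>: "2 * \<sigma>\<^sup>2 = 1 / a" "\<sigma> > 0"
    using assms by (auto simp: \<sigma>_def)
  have "exp (- a * x\<^sup>2) = sqrt (2 * pi * \<sigma>\<^sup>2) * normal_density 0 \<sigma> x" for x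
    using assms \<sigma> by (simp add: normal_density_def field_simps)
  moreover have "integrable lborel (\<lambda>x. sqrt (2 * pi * \<sigma>\<^sup>2) * normal_density 0 \<sigma> x)"
    using \<sigma> by simp
  ultimately have "integrable lborel (\<lambda>x. exp (- a * x\<^sup>2))"
    by simp
  then show ?thesis
    by (simp add: integrable_iff_bounded)
qed

lemma nn_integral_exp_neg_norm_sq_finite:
  fixes a :: real
  assumes "a > 0"
  shows "(\<integral>\<^sup>+z. ennreal (exp (- a * (norm (z::'a::euclidean_space))\<^sup>2)) \<partial>lborel) < \<infinity>"
proof -
  have eq: "ennreal (exp (- a * (norm z)\<^sup>2)) = (\<Prod>b\<in>Basis. ennreal (exp (- a * (z \<bullet> b)\<^sup>2)))"
    for z :: 'a
  proof -
    have "(norm z)\<^sup>2 = (\<Sum>b\<in>Basis. (z \<bullet> b)\<^sup>2)"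
      by (subst power2_norm_eq_inner, subst euclidean_inner) (simp add: power2_eq_square)
    then have "exp (- a * (norm z)\<^sup>2) = (\<Prod>b\<in>Basis. exp (- a * (z \<bullet> b)\<^sup>2))"
      by (simp add: exp_sum[symmetric] sum_distrib_left)
    then show ?thesis
      by (simp add: prod_ennreal)
  qed
  have "(\<integral>\<^sup>+z. ennreal (exp (- a * (norm (z::'a))\<^sup>2)) \<partial>lborel)
      = (\<Prod>b\<in>(Basis::'a set). \<integral>\<^sup>+x. ennreal (exp (- a * x\<^sup>2)) \<partial>lborel)"
    unfolding eq by (rule nn_integral_lborel_prod) auto
  also have "\<dots> < \<infinity>"
    using nn_integral_gaussian_finite[OF assms]
    by (simp add: less_top[symmetric] ennreal_prod_eq_top power_eq_top_ennreal)
  finally show ?thesis .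
qed

lemma power_le_fact_mult_exp:
  fixes y :: real
  assumes "y \<ge> 0"
  shows "y ^ n \<le> fact n * exp y"
proof -
  have "y ^ n /\<^sub>R fact n \<le> (\<Sum>k. y ^ k /\<^sub>R fact k)"
    using sum_le_suminf[of "\<lambda>k. y ^ k /\<^sub>R fact k" "{n}"] summable_exp_generic[of y] assms
    by simp
  then show ?thesis
    by (simp add: exp_def field_simps)
qed

lemma entire_fun_continuous: "entire_fun f \<Longrightarrow> continuous_on UNIV f"
  unfolding entire_fun_def
  by (meson continuous_at_imp_continuous_on has_derivative_continuous)

lemma entire_fun_coordinate_power: "entire_fun (\<lambda>z::complex^'d. (z $ j) ^ n)"
  unfolding entire_fun_def clinear_map_def
proof
  fix z :: "complex^'d"
  define L where "L h = of_nat n * h $ j * (z $ j) ^ (n - 1)" for h :: "complex^'d"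
  have "((\<lambda>z::complex^'d. (z $ j) ^ n) has_derivative L) (at z)"
    unfolding L_def
    by (intro has_derivative_power bounded_linear_imp_has_derivative bounded_linear_vec_nth)
  moreover have "linear L"
    by (rule linearI) (auto simp: L_def algebra_simps)
  moreover have "L (c *s h) = c * L h" for c h
    by (simp add: L_def)
  ultimately show "\<exists>L. (linear L \<and> (\<forall>c v. L (c *s v) = c * L v)) \<and>
      ((\<lambda>z. (z $ j) ^ n) has_derivative L) (at z)"
    by blast
qed

definition fock_L2 :: "(complex^'d \<Rightarrow> complex) set" where
  "fock_L2 = {f. continuous_on UNIV f \<and> fock_sq f < \<infinity>}"

lemma fock_space_subset_fock_L2: "fock_space \<subseteq> fock_L2"
  unfolding fock_space_def fock_L2_def using entire_fun_continuous by blast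

lemma fock_L2_measurable: "f \<in> fock_L2 \<Longrightarrow> f \<in> borel_measurable borel"
  unfolding fock_L2_def by (simp add: borel_measurable_continuous_onI)

lemma fock_sq_less_top_iff:
  "fock_sq f < \<infinity> \<longleftrightarrow>
     (\<integral>\<^sup>+ z. ennreal ((cmod (f z))\<^sup>2 * exp (- (norm z)\<^sup>2 / 2)) \<partial>lborel) < \<infinity>"
  unfolding fock_sq_def by (auto simp: ennreal_mult_less_top)

lemma fock_sq_cmult:
  assumes [measurable]: "f \<in> borel_measurable borel"
  shows "fock_sq (\<lambda>z. c * f z) = ennreal ((cmod c)\<^sup>2) * fock_sq f"
proof -
  have "(\<integral>\<^sup>+ z. ennreal ((cmod (c * f z))\<^sup>2 * exp (- (norm z)\<^sup>2 / 2)) \<partial>lborel)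
      = (\<integral>\<^sup>+ z. ennreal ((cmod c)\<^sup>2) * ennreal ((cmod (f z))\<^sup>2 * exp (- (norm z)\<^sup>2 / 2)) \<partial>lborel)"
    by (simp add: ennreal_mult[symmetric] norm_mult power_mult_distrib mult.assoc)
  also have "\<dots> = ennreal ((cmod c)\<^sup>2) *
      (\<integral>\<^sup>+ z. ennreal ((cmod (f z))\<^sup>2 * exp (- (norm z)\<^sup>2 / 2)) \<partial>lborel)"
    by (rule nn_integral_cmult) simp
  finally show ?thesis
    unfolding fock_sq_def by (simp add: mult.left_commute)
qed

lemma fock_L2_cmult: "f \<in> fock_L2 \<Longrightarrow> (\<lambda>z. c * f z) \<in> fock_L2"
  by (auto simp: fock_L2_def fock_sq_cmult[OF fock_L2_measurable] ennreal_mult_less_top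
      intro: continuous_intros)

lemma fock_L2_add:
  assumes "f \<in> fock_L2" "g \<in> fock_L2"
  shows "(\<lambda>z. f z + g z) \<in> fock_L2"
proof -
  have [measurable]: "f \<in> borel_measurable borel" "g \<in> borel_measurable borel"
    using assms by (simp_all add: fock_L2_measurable)
  let ?w = "\<lambda>z::complex^'d. exp (- (norm z)\<^sup>2 / 2)"
  have "(\<integral>\<^sup>+ z. ennreal ((cmod (f z + g z))\<^sup>2 * ?w z) \<partial>lborel)
      \<le> (\<integral>\<^sup>+ z. ennreal (2 * ((cmod (f z))\<^sup>2 * ?w z)) + ennreal (2 * ((cmod (g z))\<^sup>2 * ?w z)) \<partial>lborel)"
  proof (rule nn_integral_mono)
    fix z
    have "(cmod (f z + g z))\<^sup>2 \<le> (cmod (f z) + cmod (g z))\<^sup>2"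
      by (simp add: norm_triangle_ineq power_mono)
    also have "\<dots> \<le> 2 * (cmod (f z))\<^sup>2 + 2 * (cmod (g z))\<^sup>2"
      using zero_le_power2[of "cmod (f z) - cmod (g z)"]
      unfolding power2_sum power2_diff by linarith
    finally have "(cmod (f z + g z))\<^sup>2 * ?w z \<le> (2 * (cmod (f z))\<^sup>2 + 2 * (cmod (g z))\<^sup>2) * ?w z"
      by (rule mult_right_mono) simp
    then show "ennreal ((cmod (f z + g z))\<^sup>2 * ?w z)
        \<le> ennreal (2 * ((cmod (f z))\<^sup>2 * ?w z)) + ennreal (2 * ((cmod (g z))\<^sup>2 * ?w z))"
      by (simp add: ennreal_plus[symmetric] algebra_simps del: ennreal_plus)
  qed
  also have "\<dots> = (\<integral>\<^sup>+ z. ennreal (2 * ((cmod (f z))\<^sup>2 * ?w z)) \<partial>lborel)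
      + (\<integral>\<^sup>+ z. ennreal (2 * ((cmod (g z))\<^sup>2 * ?w z)) \<partial>lborel)"
    by (rule nn_integral_add) auto
  also have "\<dots> = 2 * (\<integral>\<^sup>+ z. ennreal ((cmod (f z))\<^sup>2 * ?w z) \<partial>lborel)
      + 2 * (\<integral>\<^sup>+ z. ennreal ((cmod (g z))\<^sup>2 * ?w z) \<partial>lborel)"
    by (simp add: ennreal_mult nn_integral_cmult)
  also have "\<dots> < \<infinity>"
    using assms unfolding fock_L2_def fock_sq_less_top_iff by (simp add: ennreal_mult_less_top)
  finally show ?thesis
    using assms unfolding fock_L2_def fock_sq_less_top_iff by (auto intro: continuous_intros)
qed

lemma fock_L2_sum:
  assumes "finite I" "\<And>i. i \<in> I \<Longrightarrow> F i \<in> fock_L2"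
  shows "(\<lambda>z. \<Sum>i\<in>I. F i z) \<in> fock_L2"
  using assms
proof (induction I rule: finite_induct)
  case empty
  then show ?case
    by (simp add: fock_L2_def fock_sq_def)
next
  case (insert i I)
  then show ?case
    by (simp add: fock_L2_add)
qed

lemma fock_sq_finite_of_poly_growth:
  fixes g :: "complex^'d \<Rightarrow> complex"
  assumes [measurable]: "g \<in> borel_measurable borel"
    and growth: "\<And>z. (cmod (g z))\<^sup>2 \<le> C * (1 + (norm z)\<^sup>2) ^ n"
  shows "fock_sq g < \<infinity>"
proof -
  have C: "C \<ge> 0"
    using growth[of 0] by simp (meson order_trans zero_le_power2)
  define K where "K = C * 4 ^ n * fact n * exp (1/4)"
  have bound: "(cmod (g z))\<^sup>2 * exp (- (norm z)\<^sup>2 / 2) \<le> K * exp (- (1/4) * (norm z)\<^sup>2)" for z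
  proof -
    define y where "y = (1 + (norm z)\<^sup>2) / 4"
    have "(1 + (norm z)\<^sup>2) ^ n = 4 ^ n * y ^ n"
      by (simp add: y_def power_divide)
    also have "\<dots> \<le> 4 ^ n * (fact n * exp y)"
      by (intro mult_left_mono power_le_fact_mult_exp) (auto simp: y_def)
    finally have "(cmod (g z))\<^sup>2 \<le> C * (4 ^ n * (fact n * exp y))"
      using growth[of z] C by (meson mult_left_mono order_trans)
    then have "(cmod (g z))\<^sup>2 * exp (- (norm z)\<^sup>2 / 2)
        \<le> C * (4 ^ n * (fact n * exp y)) * exp (- (norm z)\<^sup>2 / 2)"
      by (rule mult_right_mono) simp
    also have "exp y * exp (- (norm z)\<^sup>2 / 2) = exp (1/4) * exp (- (1/4) * (norm z)\<^sup>2)"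
      by (simp only: exp_add[symmetric]) (simp add: y_def field_simps)
    then have "C * (4 ^ n * (fact n * exp y)) * exp (- (norm z)\<^sup>2 / 2) = K * exp (- (1/4) * (norm z)\<^sup>2)"
      by (simp add: K_def mult_ac)
    finally show ?thesis .
  qed
  have "(\<integral>\<^sup>+ z. ennreal ((cmod (g z))\<^sup>2 * exp (- (norm z)\<^sup>2 / 2)) \<partial>lborel)
      \<le> (\<integral>\<^sup>+ z. ennreal K * ennreal (exp (- (1/4) * (norm (z::complex^'d))\<^sup>2)) \<partial>lborel)"
    using bound by (intro nn_integral_mono) (simp add: ennreal_mult[symmetric] C K_def ennreal_leI)
  also have "\<dots> = ennreal K * (\<integral>\<^sup>+ z. ennreal (exp (- (1/4) * (norm (z::complex^'d))\<^sup>2)) \<partial>lborel)"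
    by (rule nn_integral_cmult) simp
  also have "\<dots> < \<infinity>"
    using nn_integral_exp_neg_norm_sq_finite[of "1/4", where 'a="complex^'d"]
    by (simp add: ennreal_mult_less_top)
  finally show ?thesis
    unfolding fock_sq_less_top_iff .
qed

lemma coordinate_power_in_fock_space: "(\<lambda>z::complex^'d. (z $ j) ^ n) \<in> fock_space"
proof -
  have growth: "(cmod ((z $ j) ^ n))\<^sup>2 \<le> 1 * (1 + (norm z)\<^sup>2) ^ n" for z :: "complex^'d"
  proof -
    have "(cmod ((z $ j) ^ n))\<^sup>2 = ((cmod (z $ j))\<^sup>2) ^ n"
      by (simp add: norm_power flip: power_mult) (simp add: mult.commute)
    also have "\<dots> \<le> (1 + (norm z)\<^sup>2) ^ n"
    proof (rule power_mono)
      have "(cmod (z $ j))\<^sup>2 \<le> (norm z)\<^sup>2"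
        by (rule power_mono[OF Finite_Cartesian_Product.norm_nth_le]) simp
      then show "(cmod (z $ j))\<^sup>2 \<le> 1 + (norm z)\<^sup>2"
        by linarith
    qed simp
    finally show ?thesis by simp
  qed
  have "continuous_on UNIV (\<lambda>z::complex^'d. (z $ j) ^ n)"
    by (rule entire_fun_continuous[OF entire_fun_coordinate_power])
  then have "fock_sq (\<lambda>z::complex^'d. (z $ j) ^ n) < \<infinity>"
    by (intro fock_sq_finite_of_poly_growth[OF _ growth] borel_measurable_continuous_onI)
  then show ?thesis
    unfolding fock_space_def using entire_fun_coordinate_power by blast
qed

lemma continuous_on_shift:
  fixes f :: "'a::real_normed_vector \<Rightarrow> 'b::topological_space"
  shows "continuous_on UNIV f \<Longrightarrow> continuous_on UNIV (\<lambda>z. f (z + u))"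
  by (rule continuous_on_compose2[of UNIV f]) (auto intro!: continuous_intros)

lemma fock_norm_sq: "(fock_norm f)\<^sup>2 = enn2real (fock_sq f)"
  by (simp add: fock_norm_def)

lemma nn_integral_lborel_translate:
  fixes f :: "'a::euclidean_space \<Rightarrow> ennreal"
  assumes [measurable]: "f \<in> borel_measurable borel"
  shows "(\<integral>\<^sup>+ z. f (z + u) \<partial>lborel) = (\<integral>\<^sup>+ z. f z \<partial>lborel)"
proof -
  have "(\<integral>\<^sup>+ z. f z \<partial>lborel) = (\<integral>\<^sup>+ z. f z \<partial>distr lborel borel ((+) u))"
    by (simp only: lborel_distr_plus)
  also have "\<dots> = (\<integral>\<^sup>+ z. f (u + z) \<partial>lborel)"
    by (rule nn_integral_distr) auto
  finally show ?thesis
    by (simp add: add.commute)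
qed

lemma box_integral_sq_le_gaussian_nn_integral:
  fixes f :: "'a::euclidean_space \<Rightarrow> 'b::real_normed_vector"
  assumes cont: "continuous_on UNIV f" and B: "\<And>z. z \<in> cbox a b \<Longrightarrow> norm z \<le> B"
  shows "ennreal (integral (cbox a b) (\<lambda>z. (norm (f (z + u)))\<^sup>2))
    \<le> ennreal (exp ((B + norm u)\<^sup>2 / 2)) * (\<integral>\<^sup>+ z. ennreal ((norm (f z))\<^sup>2 * exp (- (norm z)\<^sup>2 / 2)) \<partial>lborel)"
proof -
  have [measurable]: "f \<in> borel_measurable borel"
    using cont by (rule borel_measurable_continuous_onI)
  define h where "h = (\<lambda>z. (norm (f (z + u)))\<^sup>2)"
  let ?w = "\<lambda>z::'a. exp (- (norm z)\<^sup>2 / 2)"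
  have "continuous_on UNIV h"
    unfolding h_def by (intro continuous_intros continuous_on_shift cont)
  then have "(h has_integral integral (cbox a b) h) (cbox a b)"
    by (intro integrable_integral integrable_continuous[OF continuous_on_subset[OF _ subset_UNIV]])
  from nn_integral_has_integral_lebesgue[OF _ this]
  have "ennreal (integral (cbox a b) h) = (\<integral>\<^sup>+ z. ennreal (indicator (cbox a b) z * h z) \<partial>lborel)"
    by (simp add: h_def)
  also have "\<dots> \<le> (\<integral>\<^sup>+ z. ennreal (exp ((B + norm u)\<^sup>2 / 2)) * ennreal (h z * ?w (z + u)) \<partial>lborel)"
  proof (rule nn_integral_mono)
    fix z
    show "ennreal (indicator (cbox a b) z * h z) \<le> ennreal (exp ((B + norm u)\<^sup>2 / 2)) * ennreal (h z * ?w (z + u))"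
    proof (cases "z \<in> cbox a b")
      case True
      have "norm (z + u) \<le> B + norm u"
        using B[OF True] norm_triangle_ineq[of z u] by linarith
      then have "exp (- (B + norm u)\<^sup>2 / 2) \<le> ?w (z + u)"
        by (simp add: power_mono)
      then have "h z * exp (- (B + norm u)\<^sup>2 / 2) \<le> h z * ?w (z + u)"
        by (rule mult_left_mono) (simp add: h_def)
      then have "h z \<le> exp ((B + norm u)\<^sup>2 / 2) * (h z * ?w (z + u))"
        by (simp add: exp_minus field_simps)
      then show ?thesis
        using True by (simp add: ennreal_mult[symmetric] h_def ennreal_leI)
    qed simp
  qed
  also have "\<dots> = ennreal (exp ((B + norm u)\<^sup>2 / 2)) * (\<integral>\<^sup>+ z. ennreal (h z * ?w (z + u)) \<partial>lborel)"
    by (rule nn_integral_cmult) (simp add: h_def)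
  also have "(\<integral>\<^sup>+ z. ennreal (h z * ?w (z + u)) \<partial>lborel)
      = (\<integral>\<^sup>+ z. ennreal ((norm (f z))\<^sup>2 * ?w z) \<partial>lborel)"
    unfolding h_def by (rule nn_integral_lborel_translate[where f="\<lambda>z. ennreal ((norm (f z))\<^sup>2 * ?w z)"]) simp
  finally show ?thesis
    by (simp add: h_def)
qed

lemma box_integral_sq_shift_le:
  fixes a b u :: "complex^'d"
  shows "\<exists>C\<ge>0. \<forall>f\<in>fock_L2.
     integral (cbox a b) (\<lambda>z. (cmod (f (z + u)))\<^sup>2) \<le> C * (fock_norm f)\<^sup>2"
proof -
  obtain B where B: "\<And>z. z \<in> cbox a b \<Longrightarrow> norm z \<le> B"
    using bounded_cbox[of a b] unfolding bounded_iff by blast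
  define K where "K = exp ((B + norm u)\<^sup>2 / 2)"
  define c where "c = (2 * pi) powr (- real CARD('d))"
  have K: "K > 0" and c: "c > 0"
    by (simp_all add: K_def c_def)
  have "integral (cbox a b) (\<lambda>z. (cmod (f (z + u)))\<^sup>2) \<le> K / c * (fock_norm f)\<^sup>2"
    if f: "f \<in> fock_L2" for f
  proof -
    define N where "N = (\<integral>\<^sup>+ z. ennreal ((cmod (f z))\<^sup>2 * exp (- (norm z)\<^sup>2 / 2)) \<partial>lborel)"
    have "N < \<infinity>"
      using f unfolding fock_L2_def fock_sq_less_top_iff N_def by simp
    then have N: "N = ennreal (enn2real N)"
      by simp
    have "ennreal (integral (cbox a b) (\<lambda>z. (cmod (f (z + u)))\<^sup>2)) \<le> ennreal K * N"
      using box_integral_sq_le_gaussian_nn_integral[OF _ B] f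
      unfolding K_def N_def fock_L2_def by blast
    also have "\<dots> = ennreal (K * enn2real N)"
      using K by (subst N) (simp add: ennreal_mult)
    finally have "integral (cbox a b) (\<lambda>z. (cmod (f (z + u)))\<^sup>2) \<le> K * enn2real N"
      using K by (simp add: ennreal_le_iff)
    moreover have "(fock_norm f)\<^sup>2 = c * enn2real N"
      using c by (simp add: fock_norm_sq fock_sq_def c_def N_def enn2real_mult)
    ultimately show ?thesis
      using c by (simp add: field_simps)
  qed
  moreover have "K / c \<ge> 0"
    using K c by simp
  ultimately show ?thesis
    by blast
qed

lemma box_integral_norm_shift_le:
  fixes a b u :: "complex^'d"
  shows "\<exists>K. \<forall>f\<in>fock_L2. \<forall>\<epsilon>>0. fock_norm f < \<epsilon> \<longrightarrow>
     integral (cbox a b) (\<lambda>z. cmod (f (z + u))) \<le> K * \<epsilon>"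
proof -
  obtain C where C: "C \<ge> 0"
    and sq: "\<And>f. f \<in> fock_L2 \<Longrightarrow> integral (cbox a b) (\<lambda>z. (cmod (f (z + u)))\<^sup>2) \<le> C * (fock_norm f)\<^sup>2"
    using box_integral_sq_shift_le[of a b u] by blast
  have "integral (cbox a b) (\<lambda>z. cmod (f (z + u))) \<le> (Henstock_Kurzweil_Integration.content (cbox a b) + C) / 2 * \<epsilon>"
    if f: "f \<in> fock_L2" and \<epsilon>: "\<epsilon> > 0" "fock_norm f < \<epsilon>" for f \<epsilon>
  proof -
    let ?h = "\<lambda>z. (cmod (f (z + u)))\<^sup>2"
    have "continuous_on UNIV (\<lambda>z. f (z + u))"
      using f unfolding fock_L2_def by (intro continuous_on_shift) simp
    then have int: "(\<lambda>z. cmod (f (z + u))) integrable_on cbox a b" "?h integrable_on cbox a b"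
      by (auto intro!: integrable_continuous[OF continuous_on_subset[OF _ subset_UNIV]] continuous_intros)
    \<comment> \<open>AM-GM: \<open>|f| \<le> \<epsilon>/2 + |f|\<^sup>2/(2\<epsilon>)\<close>\<close>
    have "integral (cbox a b) (\<lambda>z. cmod (f (z + u))) \<le> integral (cbox a b) (\<lambda>z. \<epsilon> / 2 + ?h z * (1 / (2 * \<epsilon>)))"
    proof (rule integral_le)
      fix z
      have "0 \<le> (cmod (f (z + u)) - \<epsilon>)\<^sup>2"
        by simp
      then show "cmod (f (z + u)) \<le> \<epsilon> / 2 + ?h z * (1 / (2 * \<epsilon>))"
        using \<epsilon> by (simp add: field_simps power2_eq_square algebra_simps)
    qed (use int in \<open>auto intro!: integrable_add integrable_on_mult_left integrable_on_divide\<close>)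
    also have "\<dots> = Henstock_Kurzweil_Integration.content (cbox a b) * (\<epsilon> / 2) + integral (cbox a b) ?h * (1 / (2 * \<epsilon>))"
      using int by (subst integral_add) (auto intro: integrable_on_divide)
    also have "\<dots> \<le> Henstock_Kurzweil_Integration.content (cbox a b) * (\<epsilon> / 2) + C * \<epsilon>\<^sup>2 * (1 / (2 * \<epsilon>))"
    proof -
      have "(fock_norm f)\<^sup>2 \<le> \<epsilon>\<^sup>2"
        using \<epsilon> by (intro power_mono) (auto simp: fock_norm_def)
      then show ?thesis
        using sq[OF f] C \<epsilon> by (intro add_left_mono mult_right_mono) (auto intro: order_trans mult_left_mono)
    qed
    also have "\<dots> = (Henstock_Kurzweil_Integration.content (cbox a b) + C) / 2 * \<epsilon>"
      using \<epsilon> by (simp add: field_simps power2_eq_square)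
    finally show ?thesis .
  qed
  then show ?thesis
    by blast
qed

definition box_increment :: "complex^'d \<Rightarrow> complex^'d \<Rightarrow> (complex^'d \<Rightarrow> complex) \<Rightarrow> complex" where
  "box_increment v u F = integral (cbox 0 One) (\<lambda>z. F (z + u) - F (z + u + v))"

lemma integrable_shift_increment:
  fixes F :: "complex^'d \<Rightarrow> complex"
  assumes "continuous_on UNIV F"
  shows "(\<lambda>z. F (z + u) - F (z + u + v)) integrable_on cbox a b"
proof -
  have "continuous_on UNIV (\<lambda>z. F (z + u) - F (z + (u + v)))"
    using assms by (intro continuous_intros continuous_on_shift)
  then show ?thesis
    by (simp add: add.assoc integrable_continuous[OF continuous_on_subset[OF _ subset_UNIV]])
qed

lemma box_increment_bounded:
  "\<exists>M. \<forall>F\<in>fock_L2. \<forall>\<epsilon>>0. fock_norm F < \<epsilon> \<longrightarrow> cmod (box_increment v u F) \<le> M * \<epsilon>"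
proof -
  obtain K1 where K1: "\<And>f \<epsilon>. f \<in> fock_L2 \<Longrightarrow> \<epsilon> > 0 \<Longrightarrow> fock_norm f < \<epsilon> \<Longrightarrow>
      integral (cbox 0 One) (\<lambda>z. cmod (f (z + u))) \<le> K1 * \<epsilon>"
    using box_integral_norm_shift_le[of 0 One u] by blast
  obtain K2 where K2: "\<And>f \<epsilon>. f \<in> fock_L2 \<Longrightarrow> \<epsilon> > 0 \<Longrightarrow> fock_norm f < \<epsilon> \<Longrightarrow>
      integral (cbox 0 One) (\<lambda>z. cmod (f (z + (u + v)))) \<le> K2 * \<epsilon>"
    using box_integral_norm_shift_le[of 0 One "u + v"] by blast
  have "cmod (box_increment v u F) \<le> (K1 + K2) * \<epsilon>"
    if F: "F \<in> fock_L2" and \<epsilon>: "\<epsilon> > 0" "fock_norm F < \<epsilon>" for F \<epsilon>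
  proof -
    have cont: "continuous_on UNIV F"
      using F by (simp add: fock_L2_def)
    have int: "(\<lambda>z. cmod (F (z + u))) integrable_on cbox 0 One"
        "(\<lambda>z. cmod (F (z + (u + v)))) integrable_on cbox 0 One"
      by (intro integrable_continuous[OF continuous_on_subset[OF _ subset_UNIV]]
          continuous_intros continuous_on_shift cont)+
    have "cmod (box_increment v u F)
        \<le> integral (cbox 0 One) (\<lambda>z. cmod (F (z + u)) + cmod (F (z + (u + v))))"
      unfolding box_increment_def
      by (rule integral_norm_bound_integral[OF integrable_shift_increment[OF cont] integrable_add[OF int]])
        (simp add: add.assoc norm_triangle_ineq4)
    also have "\<dots> \<le> K1 * \<epsilon> + K2 * \<epsilon>"
      using K1[OF F \<epsilon>] K2[OF F \<epsilon>] int by (simp add: integral_add)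
    finally show ?thesis
      by (simp add: distrib_right)
  qed
  then show ?thesis
    by blast
qed

lemma box_increment_cong:
  assumes "\<And>y. F y - F (y + v) = G y - G (y + v)"
  shows "box_increment v u F = box_increment v u G"
  using assms by (simp add: box_increment_def)

lemma box_increment_diff:
  assumes "continuous_on UNIV F" "continuous_on UNIV G"
  shows "box_increment v u (\<lambda>z. F z - c * G z) = box_increment v u F - c * box_increment v u G"
proof -
  have "box_increment v u (\<lambda>z. F z - c * G z)
      = integral (cbox 0 One) (\<lambda>z. (F (z + u) - F (z + u + v)) - c * (G (z + u) - G (z + u + v)))"
    unfolding box_increment_def by (simp add: algebra_simps)
  then show ?thesis
    unfolding box_increment_def
    using integrable_shift_increment[OF assms(1)] integrable_shift_increment[OF assms(2)]
    by (simp add: integral_diff integrable_on_mult_right)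
qed

lemma box_increment_coordinate:
  fixes v u :: "complex^'d"
  shows "box_increment v u (\<lambda>z. z $ j) = - v $ j"
  by (simp add: box_increment_def)

lemma box_increment_coordinate_sq:
  fixes v u :: "complex^'d"
  shows "box_increment v (u + axis j 1) (\<lambda>z. (z $ j)\<^sup>2) - box_increment v u (\<lambda>z. (z $ j)\<^sup>2) = - 2 * v $ j"
proof -
  have cont: "continuous_on UNIV (\<lambda>z::complex^'d. (z $ j)\<^sup>2)"
    by (rule entire_fun_continuous[OF entire_fun_coordinate_power])
  have "((z + (u + axis j 1)) $ j)\<^sup>2 - ((z + (u + axis j 1) + v) $ j)\<^sup>2
      - (((z + u) $ j)\<^sup>2 - ((z + u + v) $ j)\<^sup>2) = - 2 * v $ j" for z
    by (simp add: power2_eq_square algebra_simps)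
  note pointwise = this
  have "box_increment v (u + axis j 1) (\<lambda>z. (z $ j)\<^sup>2) - box_increment v u (\<lambda>z. (z $ j)\<^sup>2)
      = integral (cbox 0 One) (\<lambda>z::complex^'d. - 2 * v $ j)"
    unfolding box_increment_def
      integral_diff[OF integrable_shift_increment[OF cont] integrable_shift_increment[OF cont], symmetric]
    by (simp only: pointwise)
  then show ?thesis
    by simp
qed

lemma orbit_sum_increment:
  fixes \<phi> :: "'a::ab_group_add \<Rightarrow> 'a" and x :: "'a \<Rightarrow> 'b::comm_ring"
  assumes "\<And>y. \<phi> (y + v) = \<phi> y"
  shows "(\<Sum>k<N. c k * x ((\<phi> ^^ k) y)) - (\<Sum>k<N. c k * x ((\<phi> ^^ k) (y + v)))
    = (if N = 0 then 0 else c 0 * (x y - x (y + v)))"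
proof (cases N)
  case (Suc M)
  have shift: "(\<phi> ^^ Suc k) (y + v) = (\<phi> ^^ Suc k) y" for k
    by (simp only: funpow_Suc_right comp_apply assms)
  show ?thesis
    unfolding Suc sum.lessThan_Suc_shift shift by (simp add: algebra_simps)
qed simp

definition cyclic_vector :: "(complex^'d \<Rightarrow> complex^'d) \<Rightarrow> (complex^'d \<Rightarrow> complex) \<Rightarrow> bool" where
  "cyclic_vector \<phi> x \<longleftrightarrow> x \<in> fock_space \<and>
     (\<forall>g\<in>fock_space. \<forall>\<epsilon>>0. \<exists>N c. fock_norm (\<lambda>z. g z - (\<Sum>k<N. c k * x ((\<phi> ^^ k) z))) < \<epsilon>)"

lemma cyclic_comp_op_iff: "cyclic_comp_op \<phi> \<longleftrightarrow> (\<exists>x. cyclic_vector \<phi> x)"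
  unfolding cyclic_comp_op_def cyclic_vector_def by blast

lemma orbit_in_fock_space:
  assumes "bounded_comp_op \<phi>" "x \<in> fock_space"
  shows "x \<circ> (\<phi> ^^ k) \<in> fock_space"
proof (induction k)
  case (Suc k)
  then have "(x \<circ> (\<phi> ^^ k)) \<circ> \<phi> \<in> fock_space"
    using assms(1) unfolding bounded_comp_op_def by blast
  then show ?case
    by (simp only: funpow_Suc_right comp_assoc)
qed (simp add: assms(2))

lemma orbit_residual_in_fock_L2:
  assumes "bounded_comp_op \<phi>" "x \<in> fock_space" "g \<in> fock_space"
  shows "(\<lambda>z. g z - (\<Sum>k<N. c k * x ((\<phi> ^^ k) z))) \<in> fock_L2"
proof -
  have "(\<lambda>z. x ((\<phi> ^^ k) z)) \<in> fock_L2" for k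
    using orbit_in_fock_space[OF assms(1,2), of k] fock_space_subset_fock_L2
    unfolding comp_def by blast
  then have sum: "(\<lambda>z. \<Sum>k<N. c k * x ((\<phi> ^^ k) z)) \<in> fock_L2"
    by (intro fock_L2_sum fock_L2_cmult finite_lessThan)
  show ?thesis
    using fock_L2_add[OF _ fock_L2_cmult[OF sum, of "-1"], of g] assms(3) fock_space_subset_fock_L2
    by auto
qed

lemma box_increment_orbit_residual:
  assumes "\<And>y. \<phi> (y + v) = \<phi> y" "continuous_on UNIV g" "continuous_on UNIV x"
  shows "box_increment v u (\<lambda>z. g z - (\<Sum>k<N. c k * x ((\<phi> ^^ k) z)))
    = box_increment v u g - (if N = 0 then 0 else c 0) * box_increment v u x"
proof -
  define S where "S = (\<lambda>z. \<Sum>k<N. c k * x ((\<phi> ^^ k) z))"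
  define c0 where "c0 = (if N = 0 then 0 else c 0)"
  have S_incr: "S y - S (y + v) = c0 * (x y - x (y + v))" for y
    using orbit_sum_increment[where \<phi>=\<phi> and v=v and N=N and c=c and x=x, OF assms(1)]
    by (simp add: S_def c0_def)
  have "(g y - S y) - (g (y + v) - S (y + v)) = (g y - c0 * x y) - (g (y + v) - c0 * x (y + v))" for y
    using S_incr[of y] by (simp add: algebra_simps)
  then have "box_increment v u (\<lambda>z. g z - S z) = box_increment v u (\<lambda>z. g z - c0 * x z)"
    by (rule box_increment_cong)
  then show ?thesis
    by (simp add: S_def c0_def box_increment_diff[OF assms(2,3)])
qed

lemma box_increments_in_closure_line:
  assumes bounded: "bounded_comp_op \<phi>" and x: "cyclic_vector \<phi> x"
    and invariant: "\<And>y. \<phi> (y + v) = \<phi> y" and g: "g \<in> fock_space"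
  shows "(box_increment v u g, box_increment v w g)
    \<in> closure (range (\<lambda>c. (c * box_increment v u x, c * box_increment v w x)))"
  unfolding closure_approachable_le
proof (intro allI impI)
  fix e :: real
  assume e: "e > 0"
  obtain M1 where M1: "\<And>F \<epsilon>. F \<in> fock_L2 \<Longrightarrow> \<epsilon> > 0 \<Longrightarrow> fock_norm F < \<epsilon> \<Longrightarrow>
      cmod (box_increment v u F) \<le> M1 * \<epsilon>"
    using box_increment_bounded[of v u] by blast
  obtain M2 where M2: "\<And>F \<epsilon>. F \<in> fock_L2 \<Longrightarrow> \<epsilon> > 0 \<Longrightarrow> fock_norm F < \<epsilon> \<Longrightarrow>
      cmod (box_increment v w F) \<le> M2 * \<epsilon>"
    using box_increment_bounded[of v w] by blast
  define \<epsilon> where "\<epsilon> = e / (\<bar>M1\<bar> + \<bar>M2\<bar> + 1)"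
  have \<epsilon>: "\<epsilon> > 0"
    using e by (simp add: \<epsilon>_def add_nonneg_pos)
  obtain N c where approx: "fock_norm (\<lambda>z. g z - (\<Sum>k<N. c k * x ((\<phi> ^^ k) z))) < \<epsilon>"
    using x g \<epsilon> unfolding cyclic_vector_def by blast
  define F where "F = (\<lambda>z. g z - (\<Sum>k<N. c k * x ((\<phi> ^^ k) z)))"
  define c0 where "c0 = (if N = 0 then 0 else c 0)"
  have F: "F \<in> fock_L2"
    using orbit_residual_in_fock_L2[OF bounded _ g] x by (simp add: F_def cyclic_vector_def)
  have "continuous_on UNIV g" "continuous_on UNIV x"
    using g x fock_space_subset_fock_L2 by (auto simp: cyclic_vector_def fock_L2_def)
  then have incr: "box_increment v t F = box_increment v t g - c0 * box_increment v t x" for t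
    unfolding F_def c0_def by (rule box_increment_orbit_residual[where \<phi>=\<phi> and v=v, OF invariant])
  have "dist (c0 * box_increment v u x, c0 * box_increment v w x) (box_increment v u g, box_increment v w g)
      \<le> cmod (box_increment v u F) + cmod (box_increment v w F)"
    unfolding dist_Pair_Pair unfolding dist_norm incr
    by (rule order_trans[OF sqrt_sum_squares_le_sum_abs]) (simp add: norm_minus_commute)
  also have "\<dots> \<le> M1 * \<epsilon> + M2 * \<epsilon>"
    using M1[OF F \<epsilon>] M2[OF F \<epsilon>] approx by (simp add: F_def)
  also have "\<dots> \<le> (\<bar>M1\<bar> + \<bar>M2\<bar> + 1) * \<epsilon>"
    using \<epsilon> by (simp add: distrib_right[symmetric] mult_right_mono)
  also have "\<dots> = e"
    by (simp add: \<epsilon>_def add_nonneg_pos)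
  finally show "\<exists>y\<in>range (\<lambda>c. (c * box_increment v u x, c * box_increment v w x)).
      dist y (box_increment v u g, box_increment v w g) \<le> e"
    by (intro bexI[OF _ rangeI])
qed

lemma closure_line_pairs_dependent:
  fixes p q s1 t1 s2 t2 :: complex
  assumes "(s1, t1) \<in> closure (range (\<lambda>c. (c * p, c * q)))"
    and "(s2, t2) \<in> closure (range (\<lambda>c. (c * p, c * q)))"
  shows "s1 * t2 = s2 * t1"
proof (cases "p = 0 \<and> q = 0")
  case True
  then show ?thesis
    using assms by simp
next
  case False
  have "closed {z. fst z * q = snd z * p}"
    by (intro closed_Collect_eq continuous_intros)
  then have "closure (range (\<lambda>c. (c * p, c * q))) \<subseteq> {z. fst z * q = snd z * p}"
    by (intro closure_minimal) auto
  then have "s1 * q = t1 * p" "s2 * q = t2 * p"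
    using assms by auto
  then have "(s1 * t2 - s2 * t1) * p = 0" "(s1 * t2 - s2 * t1) * q = 0"
    by algebra+
  then show ?thesis
    using False by auto
qed

theorem mainTheorem9:
  fixes A :: "complex^'d^'d" and b :: "complex^'d"
  assumes "\<not> invertible A"
    and "bounded_comp_op (\<lambda>z. A *v z + b)"
  shows "\<not> cyclic_comp_op (\<lambda>z. A *v z + b)"
proof
  let ?\<phi> = "\<lambda>z. A *v z + b"
  assume "cyclic_comp_op ?\<phi>"
  then obtain x where x: "cyclic_vector ?\<phi> x"
    by (auto simp: cyclic_comp_op_iff)
  obtain v where "v \<noteq> 0" and kernel: "A *v v = 0"
    using assms(1) unfolding invertible_left_inverse matrix_left_invertible_ker by blast
  then obtain j where j: "v $ j \<noteq> 0"
    by (metis vec_eq_iff zero_index)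
  have invariant: "?\<phi> (y + v) = ?\<phi> y" for y
    using kernel by (simp add: matrix_vector_right_distrib)
  let ?\<Lambda> = "\<lambda>g. (box_increment v 0 g, box_increment v (axis j 1) g)"
  have line: "?\<Lambda> g \<in> closure (range (\<lambda>c. (c * box_increment v 0 x, c * box_increment v (axis j 1) x)))"
    if "g \<in> fock_space" for g
    using box_increments_in_closure_line[OF assms(2) x invariant that] .
  have "box_increment v 0 (\<lambda>z. (z $ j) ^ 1) * box_increment v (axis j 1) (\<lambda>z. (z $ j)\<^sup>2)
      = box_increment v 0 (\<lambda>z. (z $ j)\<^sup>2) * box_increment v (axis j 1) (\<lambda>z. (z $ j) ^ 1)"
    using closure_line_pairs_dependent[OF line[OF coordinate_power_in_fock_space[of j 1]]
        line[OF coordinate_power_in_fock_space[of j 2]]] .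
  then have "v $ j * (box_increment v (axis j 1) (\<lambda>z. (z $ j)\<^sup>2) - box_increment v 0 (\<lambda>z. (z $ j)\<^sup>2)) = 0"
    by (simp add: box_increment_coordinate algebra_simps)
  then show False
    using j box_increment_coordinate_sq[of v 0 j] by simp
qed

end
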